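(* The set ${\operatorname{\mathsf{TPD}}}_{n}(\mathbb{S}_{\max}^\vee)$ is equal to the set \[ \{A=(a_{ij}) \in (\mathbb{S}_{\max}^{\vee})^{n \times n} : \mathbf{0} < a_{ii}\; \forall i \in [n],\; a_{ij}=a_{ji} \;\text{and}\; a_{ij}^{ 2} < a_{ii} a_{jj}\; \forall i,j \in [n], i \neq j\}\enspace . \]
   Context: $\mathbb{S}_{\max}$ is the symmetrized tropical semiring over a divisible totally ordered abelian group, with zero $\mathbf{0}$, unit $\mathbf{1}$, minus $\ominus$; $\mathbb{S}_{\max}^\vee$ is the set of signed elements (positive, negative or $\mathbf{0}$), $\mathbb{S}_{\max}^\oplus$ the set of positive elements together with $\mathbf{0}$. For $a,b\in\mathbb{S}_{\max}$, $a<b$ iff $b\ominus a\in\mathbb{S}_{\max}^\oplus\setminus\{\mathbf{0}\}$. ${\operatorname{\mathsf{TPD}}}_n(\mathbb{S}_{\max}^\vee)$ is the set of symmetric matrices $A\in(\mathbb{S}_{\max}^\vee)^{n\times n}$ such that $\mathbf{0}<x^TAx$ for all $x\in(\mathbb{S}_{\max}^\vee)^n\setminus\{\mathbf{0}\}$. *)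

theory Defs
  imports Main
begin

text \<open>Symmetrized tropical (max-plus) semiring over a totally ordered abelian
  group 'g (written additively).  Elements: the zero (= -infinity), and for each
  modulus a in 'g a positive element (+a), a negative element (-a) and a
  balanced element (a*).\<close>

datatype ssign = SP | SN | SB

datatype 'g smax = SZero | SEl ssign 'g

fun ssign_mul :: "ssign \<Rightarrow> ssign \<Rightarrow> ssign" where
  "ssign_mul SB _ = SB"
| "ssign_mul _ SB = SB"
| "ssign_mul SP SP = SP"
| "ssign_mul SN SN = SP"
| "ssign_mul SP SN = SN"
| "ssign_mul SN SP = SN"

fun ssign_neg :: "ssign \<Rightarrow> ssign" where
  "ssign_neg SP = SN"
| "ssign_neg SN = SP"
| "ssign_neg SB = SB"

fun splus :: "'g::linorder smax \<Rightarrow> 'g smax \<Rightarrow> 'g smax" where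
  "splus SZero y = y"
| "splus x SZero = x"
| "splus (SEl s a) (SEl t b) =
     (if b < a then SEl s a
      else if a < b then SEl t b
      else if s = t then SEl s a else SEl SB a)"

fun stimes :: "'g::plus smax \<Rightarrow> 'g smax \<Rightarrow> 'g smax" where
  "stimes SZero _ = SZero"
| "stimes _ SZero = SZero"
| "stimes (SEl s a) (SEl t b) = SEl (ssign_mul s t) (a + b)"

fun sminus :: "'g smax \<Rightarrow> 'g smax" where
  "sminus SZero = SZero"
| "sminus (SEl s a) = SEl (ssign_neg s) a"

definition sminus2 :: "'g::linorder smax \<Rightarrow> 'g smax \<Rightarrow> 'g smax" where
  "sminus2 a b = splus a (sminus b)"

definition signed :: "'g smax \<Rightarrow> bool" where
  "signed x \<longleftrightarrow> x = SZero \<or> (\<exists>s a. s \<noteq> SB \<and> x = SEl s a)"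

definition spositive :: "'g smax \<Rightarrow> bool" where
  "spositive x \<longleftrightarrow> x = SZero \<or> (\<exists>a. x = SEl SP a)"

definition sless :: "'g::linorder smax \<Rightarrow> 'g smax \<Rightarrow> bool" where
  "sless a b \<longleftrightarrow> spositive (sminus2 b a) \<and> sminus2 b a \<noteq> SZero"

definition ssum :: "'g::linorder smax list \<Rightarrow> 'g smax" where
  "ssum xs = foldr splus xs SZero"

definition quad_form :: "nat \<Rightarrow> (nat \<Rightarrow> nat \<Rightarrow> 'g::{linorder,plus} smax) \<Rightarrow> (nat \<Rightarrow> 'g smax) \<Rightarrow> 'g smax" where
  "quad_form n A x =
     ssum (concat (map (\<lambda>i. map (\<lambda>j. stimes (stimes (x i) (A i j)) (x j)) [0..<n]) [0..<n]))"

definition TPD :: "nat \<Rightarrow> (nat \<Rightarrow> nat \<Rightarrow> 'g::linordered_ab_group_add smax) set" where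
  "TPD n = {A. (\<forall>i<n. \<forall>j<n. signed (A i j)) \<and> (\<forall>i<n. \<forall>j<n. A i j = A j i) \<and>
      (\<forall>x. (\<forall>i<n. signed (x i)) \<and> (\<exists>i<n. x i \<noteq> SZero) \<longrightarrow> sless SZero (quad_form n A x))}"

definition divisible_group :: "'g::ab_group_add itself \<Rightarrow> bool" where
  "divisible_group _ \<longleftrightarrow> (\<forall>(x::'g) (k::nat). 0 < k \<longrightarrow> (\<exists>y. (\<Sum>i<k. y) = x))"

end

theory Submission
  imports Defs
begin

(* In the symmetrized max-plus semiring, a sum is decided by its terms of largest modulus, and
   x^T A x is the sum of the terms x_k a_kl x_l.  If a_kk = +d_k and the off-diagonal entry a_kl has
   modulus c with 2c < d_k + d_l, then the modulus |x_k| + c + |x_l| of a cross term lies strictly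
   below the larger of the diagonal moduli 2|x_k| + d_k and 2|x_l| + d_l.  Hence the dominant
   terms are positive diagonal ones and the form is positive.  Conversely, a unit vector picks out
   a_ii, and if a_ij has modulus c with 2c >= d_i + d_j, then the vector with x_i = 1 and x_j of
   modulus d_i - c and sign opposite to a_ij makes a negative cross term of modulus d_i dominant. *)

lemma splus_SZero_right [simp]: "splus x SZero = x"
  by (cases x) auto

lemma splus_idem [simp]: "splus x x = x"
  by (cases x) auto

lemma splus_commute: "splus x y = splus y x"
  by (cases x; cases y) auto

lemma splus_assoc: "splus (splus x y) z = splus x (splus y z)"
  by (cases x; cases y; cases z) auto

lemma splus_left_commute: "splus x (splus y z) = splus y (splus x z)"
  by (simp add: splus_assoc [symmetric] splus_commute [of x y])

lemma stimes_SZero_right [simp]: "stimes x SZero = SZero"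
  by (cases x) auto

lemma ssign_mul_SP_left [simp]: "ssign_mul SP s = s"
  and ssign_mul_SP_right [simp]: "ssign_mul s SP = s"
  by (cases s; simp)+

lemma stimes_one_left [simp]: "stimes (SEl SP 0) y = (y :: 'g::monoid_add smax)"
  and stimes_one_right [simp]: "stimes y (SEl SP 0) = y"
  by (cases y; simp)+

lemma ssign_mul_self: "s \<noteq> SB \<Longrightarrow> ssign_mul s s = SP"
  by (cases s) auto

lemma sless_SZero_iff: "sless SZero y \<longleftrightarrow> (\<exists>a. y = SEl SP a)"
  by (cases y) (auto simp: sless_def sminus2_def spositive_def)

lemma sless_SEl_SP_iff: "sless (SEl SP a) (SEl SP b) \<longleftrightarrow> a < b"
  by (auto simp: sless_def sminus2_def spositive_def)

lemma signed_SEl_iff: "signed (SEl s a) \<longleftrightarrow> s \<noteq> SB"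
  by (auto simp: signed_def)

lemma splus_absorbs_ssum:
  assumes "\<forall>y\<in>set xs. splus p y = p"
  shows "splus p (ssum xs) = p"
  using assms
proof (induction xs)
  case (Cons y ys)
  then have "splus p (splus y (ssum ys)) = p"
    by (metis list.set_intros splus_assoc)
  then show ?case by (simp add: ssum_def)
qed (simp add: ssum_def)

lemma splus_member_ssum:
  assumes "y \<in> set xs"
  shows "splus y (ssum xs) = ssum xs"
  using assms
proof (induction xs)
  case (Cons z zs)
  show ?case
  proof (cases "y = z")
    case True
    then show ?thesis by (simp add: ssum_def flip: splus_assoc)
  next
    case False
    with Cons have "splus y (ssum zs) = ssum zs" by simp
    then show ?thesis by (simp add: ssum_def splus_left_commute [of y])
  qed
qed simp

(* SEl SP M absorbs SZero, the positive elements of modulus at most M and all elements of modulus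
   below M; SEl SB M absorbs exactly SZero and the elements of modulus at most M. *)

lemma ssum_eq_absorbing_member:
  assumes "p \<in> set xs" and "\<forall>y\<in>set xs. splus p y = p"
  shows "ssum xs = p"
  using splus_member_ssum[OF assms(1)] splus_absorbs_ssum[OF assms(2)] by simp

lemma not_sless_SZero_splus_SN:
  assumes "splus (SEl SB M) z = SEl SB M"
  shows "\<not> sless SZero (splus (SEl SN M) z)"
  using assms by (cases z) (auto simp: sless_SZero_iff split: if_splits)

lemma ssum_not_positive_if_negative_top:
  fixes M :: "'g::linorder"
  assumes "SEl SN M \<in> set xs" and "\<forall>y\<in>set xs. splus (SEl SB M) y = SEl SB M"
  shows "\<not> sless SZero (ssum xs)"
  using not_sless_SZero_splus_SN[OF splus_absorbs_ssum[OF assms(2)]]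
  by (simp add: splus_member_ssum[OF assms(1)])

lemma set_quad_form_terms:
  "set (concat (map (\<lambda>i. map (\<lambda>j. f i j) [0..<n]) [0..<n])) = {f i j | i j. i < n \<and> j < n}"
  by (auto simp: image_iff) fastforce+

lemma quad_form_eq_absorbing_term:
  assumes "i < n" "j < n" "stimes (stimes (x i) (A i j)) (x j) = p"
    and "\<And>k l. k < n \<Longrightarrow> l < n \<Longrightarrow> splus p (stimes (stimes (x k) (A k l)) (x l)) = p"
  shows "quad_form n A x = p"
  unfolding quad_form_def
  by (rule ssum_eq_absorbing_member; unfold set_quad_form_terms) (use assms in force)+

lemma quad_form_not_positive:
  assumes "i < n" "j < n" "stimes (stimes (x i) (A i j)) (x j) = SEl SN M"
    and "\<And>k l. k < n \<Longrightarrow> l < n \<Longrightarrow>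
      splus (SEl SB M) (stimes (stimes (x k) (A k l)) (x l)) = SEl SB M"
  shows "\<not> sless SZero (quad_form n A x)"
  unfolding quad_form_def
  by (rule ssum_not_positive_if_negative_top[where M = M]; unfold set_quad_form_terms)
    (use assms in force)+

lemma sless_square_iff:
  assumes "signed y"
  shows "sless (stimes y y) (SEl SP m) \<longleftrightarrow> (\<forall>s c. y = SEl s c \<longrightarrow> c + c < m)"
  using assms by (cases y) (auto simp: signed_SEl_iff ssign_mul_self sless_SZero_iff sless_SEl_SP_iff)

lemma cross_term_modulus_less:
  fixes M :: "'a::linordered_ab_group_add"
  assumes "c + c < a + b" "u + a + u \<le> M" "v + b + v \<le> M"
  shows "u + c + v < M"
proof -
  have "(u + c + v) + (u + c + v) = (c + c) + (u + u + v + v)"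
    by (simp add: ac_simps)
  also have "\<dots> < (a + b) + (u + u + v + v)"
    using assms(1) by simp
  also have "\<dots> = (u + a + u) + (v + b + v)"
    by (simp add: ac_simps)
  also have "\<dots> \<le> M + M"
    using assms(2,3) by (rule add_mono)
  finally show ?thesis
    by (meson add_mono not_less)
qed

lemma
  fixes A :: "nat \<Rightarrow> nat \<Rightarrow> 'g::linordered_ab_group_add smax"
  assumes "A \<in> TPD n"
  shows TPD_signed: "i < n \<Longrightarrow> j < n \<Longrightarrow> signed (A i j)"
    and TPD_symmetric: "i < n \<Longrightarrow> j < n \<Longrightarrow> A i j = A j i"
    and TPD_quad_form_positive:
      "\<forall>k<n. signed (x k) \<Longrightarrow> k < n \<Longrightarrow> x k \<noteq> SZero \<Longrightarrow> sless SZero (quad_form n A x)"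
  using assms by (auto simp: TPD_def)

lemma TPD_diag_positive:
  fixes A :: "nat \<Rightarrow> nat \<Rightarrow> 'g::linordered_ab_group_add smax"
  assumes A: "A \<in> TPD n" and i: "i < n"
  shows "sless SZero (A i i)"
proof -
  define x :: "nat \<Rightarrow> 'g smax" where "x k = (if k = i then SEl SP 0 else SZero)" for k
  have "quad_form n A x = A i i"
    by (rule quad_form_eq_absorbing_term[OF i i]) (simp_all add: x_def)
  moreover have "sless SZero (quad_form n A x)"
    by (rule TPD_quad_form_positive[OF A _ i]) (simp_all add: x_def signed_def)
  ultimately show ?thesis
    by simp
qed

lemma TPD_offdiag_modulus:
  fixes A :: "nat \<Rightarrow> nat \<Rightarrow> 'g::linordered_ab_group_add smax"
  assumes A: "A \<in> TPD n" and ij: "i < n" "j < n" "i \<noteq> j"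
    and entries: "A i i = SEl SP a" "A j j = SEl SP b" "A i j = SEl s c" "s \<noteq> SB"
  shows "c + c < a + b"
proof (rule ccontr)
  assume "\<not> c + c < a + b"
  then have jj_le: "(a - c) + b + (a - c) \<le> a"
    by (simp add: algebra_simps)
  have ji: "A j i = SEl s c"
    using TPD_symmetric[OF A ij(1,2)] entries by simp
  have neg: "ssign_mul s (ssign_neg s) = SN" "ssign_mul (ssign_neg s) s = SN"
    using entries(4) by (cases s; simp)+
  define x where "x k = (if k = i then SEl SP 0 else if k = j then SEl (ssign_neg s) (a - c) else SZero)"
    for k :: nat
  have "\<not> sless SZero (quad_form n A x)"
  proof (rule quad_form_not_positive[OF ij(1,2)])
    show "stimes (stimes (x i) (A i j)) (x j) = SEl SN a"
      using ij entries neg by (simp add: x_def)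
    show "splus (SEl SB a) (stimes (stimes (x k) (A k l)) (x l)) = SEl SB a" for k l
    proof -
      consider "k = i" "l = i" | "k = i" "l = j" | "k = j" "l = i" | "k = j" "l = j"
        | "x k = SZero" | "x l = SZero"
        unfolding x_def by metis
      then show ?thesis
        by cases (use ij entries ji neg jj_le in \<open>simp_all add: x_def\<close>)
    qed
  qed
  moreover have "sless SZero (quad_form n A x)"
    by (rule TPD_quad_form_positive[OF A _ ij(1)])
      (use entries(4) in \<open>auto simp: x_def signed_def elim: ssign_neg.elims\<close>)
  ultimately show False
    by contradiction
qed

lemma TPD_offdiag_square_less:
  fixes A :: "nat \<Rightarrow> nat \<Rightarrow> 'g::linordered_ab_group_add smax"
  assumes A: "A \<in> TPD n" and ij: "i < n" "j < n" "i \<noteq> j"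
  shows "sless (stimes (A i j) (A i j)) (stimes (A i i) (A j j))"
proof -
  obtain a b where diag: "A i i = SEl SP a" "A j j = SEl SP b"
    using TPD_diag_positive[OF A] ij by (meson sless_SZero_iff)
  have "signed (A i j)"
    using TPD_signed[OF A ij(1,2)] .
  then show ?thesis
    using TPD_offdiag_modulus[OF A ij diag] by (auto simp: diag sless_square_iff signed_SEl_iff)
qed

lemma quad_form_positive:
  fixes A :: "nat \<Rightarrow> nat \<Rightarrow> 'g::linordered_ab_group_add smax"
  assumes signed_A: "\<forall>i<n. \<forall>j<n. signed (A i j)"
    and diag: "\<And>i. i < n \<Longrightarrow> A i i = SEl SP (d i)"
    and offdiag: "\<And>i j s c. i < n \<Longrightarrow> j < n \<Longrightarrow> i \<noteq> j \<Longrightarrow> A i j = SEl s c \<Longrightarrow>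
      c + c < d i + d j"
    and signed_x: "\<forall>i<n. signed (x i)" and nonzero_x: "\<exists>i<n. x i \<noteq> SZero"
  shows "sless SZero (quad_form n A x)"
proof -
  define S where "S = {k. k < n \<and> x k \<noteq> SZero}"
  define m where "m k = (case x k of SEl _ a \<Rightarrow> a | SZero \<Rightarrow> 0)" for k
  define M where "M = Max ((\<lambda>k. m k + d k + m k) ` S)"
  have x_S: "\<exists>s. s \<noteq> SB \<and> x k = SEl s (m k)" if "k \<in> S" for k
    using signed_x that by (auto simp: S_def m_def signed_def)
  have "finite S" "S \<noteq> {}"
    using nonzero_x by (auto simp: S_def)
  then obtain i where i: "i \<in> S" "M = m i + d i + m i"
    unfolding M_def using Max_in by blast
  have M_ge: "m k + d k + m k \<le> M" if "k \<in> S" for k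
    unfolding M_def using \<open>finite S\<close> that by simp
  have "i < n"
    using i by (simp add: S_def)
  have "quad_form n A x = SEl SP M"
  proof (rule quad_form_eq_absorbing_term[OF \<open>i < n\<close> \<open>i < n\<close>])
    show "stimes (stimes (x i) (A i i)) (x i) = SEl SP M"
      using x_S[OF i(1)] diag i \<open>i < n\<close> by (auto simp: ssign_mul_self)
    show "splus (SEl SP M) (stimes (stimes (x k) (A k l)) (x l)) = SEl SP M"
      if kl: "k < n" "l < n" for k l
    proof (cases "k \<in> S \<and> l \<in> S")
      case False
      then show ?thesis
        using kl by (auto simp: S_def)
    next
      case True
      then obtain s u where s: "s \<noteq> SB" "x k = SEl s (m k)" and u: "u \<noteq> SB" "x l = SEl u (m l)"
        using x_S by blast
      show ?thesis
      proof (cases "k = l")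
        case True
        have "m k + d k + m k \<le> M"
          using M_ge \<open>k \<in> S \<and> l \<in> S\<close> by blast
        then show ?thesis
          using s u diag kl True by (auto simp: ssign_mul_self)
      next
        case False
        have "signed (A k l)"
          using signed_A kl by simp
        then show ?thesis
        proof (cases "A k l")
          case (SEl t c)
          then have "m k + c + m l < M"
            using cross_term_modulus_less offdiag[OF kl False] M_ge \<open>k \<in> S \<and> l \<in> S\<close> by blast
          then show ?thesis
            using s u SEl by simp
        qed simp
      qed
    qed
  qed
  then show ?thesis
    by (simp add: sless_SZero_iff)
qed

lemma TPD_memI:
  fixes A :: "nat \<Rightarrow> nat \<Rightarrow> 'g::linordered_ab_group_add smax"
  assumes signed_A: "\<forall>i<n. \<forall>j<n. signed (A i j)"
    and diag_pos: "\<forall>i<n. sless SZero (A i i)"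
    and off: "\<And>i j. i < n \<Longrightarrow> j < n \<Longrightarrow> i \<noteq> j \<Longrightarrow>
      A i j = A j i \<and> sless (stimes (A i j) (A i j)) (stimes (A i i) (A j j))"
  shows "A \<in> TPD n"
proof -
  have "\<forall>i<n. \<exists>a. A i i = SEl SP a"
    using diag_pos by (simp add: sless_SZero_iff)
  then obtain d where diag: "\<And>i. i < n \<Longrightarrow> A i i = SEl SP (d i)"
    by metis
  have offdiag: "c + c < d i + d j"
    if ij: "i < n" "j < n" "i \<noteq> j" and entry: "A i j = SEl s c" for i j s c
  proof -
    have "signed (A i j)"
      using signed_A ij by simp
    then have "sless (stimes (A i j) (A i j)) (SEl SP m) \<longleftrightarrow> c + c < m" for m
      using sless_square_iff[OF \<open>signed (A i j)\<close>] entry by simp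
    then show ?thesis
      using conjunct2[OF off[OF ij]] diag ij by simp
  qed
  have sym: "A i j = A j i" if "i < n" "j < n" for i j
    using off[OF that] by (cases "i = j") simp_all
  show ?thesis
    unfolding TPD_def using signed_A sym quad_form_positive[OF signed_A diag offdiag] by simp
qed

theorem theorem4p3:
  fixes n :: nat
  assumes "divisible_group TYPE('g::linordered_ab_group_add)"
  shows "(TPD n :: (nat \<Rightarrow> nat \<Rightarrow> 'g smax) set) =
    {A. (\<forall>i<n. \<forall>j<n. signed (A i j)) \<and>
        (\<forall>i<n. sless SZero (A i i)) \<and>
        (\<forall>i<n. \<forall>j<n. i \<noteq> j \<longrightarrow>
            A i j = A j i \<and> sless (stimes (A i j) (A i j)) (stimes (A i i) (A j j)))}"
    (is "_ = ?R")
proof (intro equalityI subsetI)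
  fix A :: "nat \<Rightarrow> nat \<Rightarrow> 'g smax"
  assume A: "A \<in> TPD n"
  show "A \<in> ?R"
    using TPD_signed[OF A] TPD_symmetric[OF A] TPD_diag_positive[OF A] TPD_offdiag_square_less[OF A]
    by blast
next
  fix A :: "nat \<Rightarrow> nat \<Rightarrow> 'g smax"
  assume "A \<in> ?R"
  then show "A \<in> TPD n"
    by (intro TPD_memI) auto
qed

end
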